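(* Let $\Omega\subset\mathbb{R}^d$ ($d=2$ or $3$) and all spaces, operators, data and functionals be as described in the context. Define, for $v\in V$ and $q\in L^2(\Omega)$, $$F(v)=\begin{cases}-(f,v)+(g_N,\mathrm{tr}_0(v))_{\Gamma_N}, & v\in V_g,\\ +\infty, & \text{otherwise},\end{cases}\qquad G(q)=\tfrac12(\mathcal{A}q,q),$$ so that $\mathsf{J}^{p}(v)=F(v)+G(\Lambda v)$ for $v\in V_g$. Define for $\tau\in L^2(\Omega)$ the conjugate quantities $F^*(\Lambda^*\tau):=\sup_{v\in V_g}\{(\Lambda v,\tau)-F(v)\}$ and $G^*(\tau):=\sup_{q\in L^2(\Omega)}\{(\tau,q)-G(q)\}$. Then: (i) $-F^*(\Lambda^*\tau)-G^*(-\tau)=\mathsf{J}^{d}(\tau)$ if $\tau\in\Sigma_{fg}$ and $=-\infty$ otherwise, i.e. the dual variational problem of the primal problem "minimize $\mathsf{J}^{p}$ over $V_g$" is the problem "maximize $\mathsf{J}^{d}$ over $\Sigma_{fg}$"; (ii) if $u\in V_g$ is the minimizer of $\mathsf{J}^{p}$ over $V_g$ and $\sigma\in\Sigma_{fg}$ is the maximizer of $\mathsf{J}^{d}$ over $\Sigma_{fg}$, then the strong duality $\mathsf{J}^{p}(u)=\mathsf{J}^{d}(\sigma)$ holds, and the extremal relation $\sigma=-\mathcal{A}\Lambda u$ holds.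
   Context: $\Omega\subset\mathbb{R}^d$ is a bounded polyhedral domain with Lipschitz boundary; $(\cdot,\cdot)$ is the $L^2(\Omega)$ inner product (functions may be vector-valued, $L^2(\Omega)$ may mean $L^2(\Omega)^n$), $\|\cdot\|_0$ the $L^2$ norm, $(\cdot,\cdot)_{\Gamma}$ the $L^2$ inner product on a boundary part $\Gamma$. $V$ is a Hilbert space compactly embedded in $L^2(\Omega)$, $\Lambda:V\to L^2(\Omega)$ is linear and continuous, $\mathcal{A}$ is a self-adjoint operator on $L^2(\Omega)$ with $c_1\|q\|_0^2\le(\mathcal{A}q,q)\le c_2\|q\|_0^2$ ($c_1,c_2>0$), and $\mathcal{A}^{-1}$ its inverse. $\Lambda^t$ is the formal adjoint of $\Lambda$, $\Sigma=\{\tau\in L^2(\Omega):\Lambda^t\tau\in L^2(\Omega)\}$, and there are trace operators $\mathrm{tr}_0$ on $V$ and $\mathrm{tr}_1$ on $\Sigma$ (with values on $\partial\Omega$) such that $(\tau,\Lambda v)-(\Lambda^t\tau,v)=(\mathrm{tr}_1(\tau),\mathrm{tr}_0(v))_{\partial\Omega}$ for all $(v,\tau)\in V\times\Sigma$. $\partial\Omega=\overline{\Gamma}_D\cup\overline{\Gamma}_N$, $\Gamma_D\cap\Gamma_N=\emptyset$, $\mathrm{meas}(\Gamma_D)\ne0$. $V_0=\{v\in V:\mathrm{tr}_0(v)=0\text{ on }\Gamma_D\}$, and $\|\Lambda v\|_0\ge c_3\|v\|_0$ for $v\in V_0$ ($c_3>0$). It is also assumed that $\sup_{\tau\in\Sigma}\frac{(\Lambda^t\tau,v)}{\|\tau\|_0+\|\Lambda^t\tau\|_0}\ge\beta\|v\|_0$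 for all $v\in L^2(\Omega)$, some $\beta>0$. Data $f,g_D,g_N$ are $L^2$ functions (on $\Omega$, $\Gamma_D$, $\Gamma_N$ respectively); $u_g\in V$ with $\mathrm{tr}_0(u_g)=g_D$ on $\Gamma_D$; $V_g=u_g+V_0=\{v\in V:\mathrm{tr}_0(v)=g_D\text{ on }\Gamma_D\}$. These describe the boundary value problem $\Lambda^t(\mathcal{A}\Lambda u)=f$ in $\Omega$, $\mathrm{tr}_0(u)=g_D$ on $\Gamma_D$, $-\mathrm{tr}_1(\mathcal{A}\Lambda u)=g_N$ on $\Gamma_N$. Define $a(v,w)=(\mathcal{A}\Lambda v,\Lambda w)$, $b(\rho,\tau)=(\mathcal{A}^{-1}\rho,\tau)$, the primal functional $\mathsf{J}^{p}(v)=\frac12 a(v,v)-(f,v)+(g_N,\mathrm{tr}_0(v))_{\Gamma_N}$, the set $\Sigma_{fg}=\{\tau\in\Sigma:\Lambda^t\tau=-f,\ \mathrm{tr}_1(\tau)=g_N\text{ on }\Gamma_N\}$ and the dual functional $\mathsf{J}^{d}(\tau)=-\frac12 b(\tau,\tau)-(\mathrm{tr}_1(\tau),g_D)_{\Gamma_D}$. *)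

theory Defs
  imports "HOL-Analysis.Analysis"
begin

text \<open>Types:
  'v = the Hilbert space V;  'u = L2(Omega) in which V is embedded (via iota);
  'q = L2(Omega) (possibly vector valued) containing Lambda v and tau;
  'd = L2(Gamma_D), 'n = L2(Gamma_N)  (so L2(boundary) = L2(Gamma_D) x L2(Gamma_N)).
  The formal adjoint Lambda^t is defined distributionally with respect to a space
  Dt of test functions (the abstract counterpart of C_c^infinity(Omega)).\<close>

definition formal_adj_dom ::
  "('v \<Rightarrow> 'q::real_inner) \<Rightarrow> ('v \<Rightarrow> 'u::real_inner) \<Rightarrow> 'v set \<Rightarrow> 'q set" where
  "formal_adj_dom Lam iota Dt = {\<tau>. \<exists>w. \<forall>\<phi>\<in>Dt. \<tau> \<bullet> Lam \<phi> = w \<bullet> iota \<phi>}"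

definition formal_adj ::
  "('v \<Rightarrow> 'q::real_inner) \<Rightarrow> ('v \<Rightarrow> 'u::real_inner) \<Rightarrow> 'v set \<Rightarrow> 'q \<Rightarrow> 'u" where
  "formal_adj Lam iota Dt \<tau> = (THE w. \<forall>\<phi>\<in>Dt. \<tau> \<bullet> Lam \<phi> = w \<bullet> iota \<phi>)"

definition Jp :: "('q::real_inner \<Rightarrow> 'q) \<Rightarrow> ('v \<Rightarrow> 'q) \<Rightarrow> ('v \<Rightarrow> 'u::real_inner)
     \<Rightarrow> ('v \<Rightarrow> 'n::real_inner) \<Rightarrow> 'u \<Rightarrow> 'n \<Rightarrow> 'v \<Rightarrow> real" where
  "Jp A Lam iota tr0N f gN v =
     1/2 * (A (Lam v) \<bullet> Lam v) - f \<bullet> iota v + gN \<bullet> tr0N v"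

definition Jd :: "('q::real_inner \<Rightarrow> 'q) \<Rightarrow> ('q \<Rightarrow> 'd::real_inner) \<Rightarrow> 'd \<Rightarrow> 'q \<Rightarrow> real" where
  "Jd Ainv tr1D gD \<tau> = - 1/2 * (Ainv \<tau> \<bullet> \<tau>) - tr1D \<tau> \<bullet> gD"

definition Vg :: "('v \<Rightarrow> 'd) \<Rightarrow> 'd \<Rightarrow> 'v set" where
  "Vg tr0D gD = {v. tr0D v = gD}"

definition Sigma_fg :: "'q set \<Rightarrow> ('q \<Rightarrow> 'u::real_inner) \<Rightarrow> ('q \<Rightarrow> 'n)
     \<Rightarrow> 'u \<Rightarrow> 'n \<Rightarrow> 'q set" where
  "Sigma_fg Sig Lt tr1N f gN = {\<tau>\<in>Sig. Lt \<tau> = - f \<and> tr1N \<tau> = gN}"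

definition Ffun :: "('v \<Rightarrow> 'u::real_inner) \<Rightarrow> ('v \<Rightarrow> 'd) \<Rightarrow> ('v \<Rightarrow> 'n::real_inner)
     \<Rightarrow> 'u \<Rightarrow> 'd \<Rightarrow> 'n \<Rightarrow> 'v \<Rightarrow> ereal" where
  "Ffun iota tr0D tr0N f gD gN v =
     (if v \<in> Vg tr0D gD then ereal (- (f \<bullet> iota v) + gN \<bullet> tr0N v) else \<infinity>)"

definition Gfun :: "('q::real_inner \<Rightarrow> 'q) \<Rightarrow> 'q \<Rightarrow> real" where
  "Gfun A q = 1/2 * (A q \<bullet> q)"

definition Fstar :: "('v \<Rightarrow> 'q::real_inner) \<Rightarrow> ('v \<Rightarrow> 'u::real_inner) \<Rightarrow> ('v \<Rightarrow> 'd)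
     \<Rightarrow> ('v \<Rightarrow> 'n::real_inner) \<Rightarrow> 'u \<Rightarrow> 'd \<Rightarrow> 'n \<Rightarrow> 'q \<Rightarrow> ereal" where
  "Fstar Lam iota tr0D tr0N f gD gN \<tau> =
     (SUP v\<in>Vg tr0D gD. ereal (Lam v \<bullet> \<tau>) - Ffun iota tr0D tr0N f gD gN v)"

definition Gstar :: "('q::real_inner \<Rightarrow> 'q) \<Rightarrow> 'q \<Rightarrow> ereal" where
  "Gstar A \<tau> = (SUP q\<in>UNIV. ereal (\<tau> \<bullet> q - Gfun A q))"

end

theory Submission
  imports Defs
begin

(* The pairing tau . Lambda v + (f, v) - (g_N, tr_0 v) is linear in v. By Green's formula
   it vanishes on V_0 exactly when tau lies in Sigma_fg, and then it equals
   (tr_1 tau, g_D) on V_g; so F^* is finite only on Sigma_fg, while G^* is computed by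
   completing the square. Completing the square also gives the duality gap
   J^p(v) - J^d(tau) = 1/2 (A (Lambda v + A^-1 tau), Lambda v + A^-1 tau) >= 0, and the
   Euler-Lagrange equation of the minimizer u says that -A Lambda u lies in Sigma_fg, where
   the gap vanishes. The compactness, Poincare and inf-sup hypotheses only serve to
   guarantee that u and sigma exist, which (ii) presupposes. *)

lemma orthogonal_to_dense_imp_zero:
  fixes w :: "'a::real_inner" and g :: "'b \<Rightarrow> 'a"
  assumes "closure (g ` S) = UNIV" and "\<And>x. x \<in> S \<Longrightarrow> w \<bullet> g x = 0"
  shows "w = 0"
proof -
  have "closure (g ` S) \<subseteq> {x. w \<bullet> x = 0}"
    using assms(2) by (intro closure_minimal) (auto simp: closed_hyperplane)
  then have "w \<bullet> w = 0" using assms(1) by blast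
  then show ?thesis by simp
qed

lemma linear_coeff_zero_if_quadratic_nonneg:
  fixes a b :: real
  assumes nonneg: "\<And>t. 0 \<le> a * t + b * t\<^sup>2"
  shows "a = 0"
proof (rule ccontr)
  assume "a \<noteq> 0"
  define c where "c = \<bar>b\<bar> + 1"
  have "c > 0" unfolding c_def by simp
  define t where "t = - a / (2 * c)"
  have "b * t\<^sup>2 \<le> c * t\<^sup>2" unfolding c_def by (simp add: mult_right_mono)
  moreover have "a * t + c * t\<^sup>2 = - (a * a) / (4 * c)"
    unfolding t_def using \<open>c > 0\<close> by (simp add: field_simps power2_eq_square)
  moreover have "0 < a * a" using not_real_square_gt_zero[of a] \<open>a \<noteq> 0\<close> by blast
  then have "0 < (a * a) / (4 * c)" using \<open>c > 0\<close> by simp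
  ultimately show False using nonneg[of t] by linarith
qed

lemma SUP_linear_level_set:
  fixes h :: "'v::real_vector \<Rightarrow> real" and T :: "'v \<Rightarrow> 'd::real_vector"
  assumes h: "linear h" and T: "linear T" and v0: "T v0 = c"
  shows "(SUP v\<in>{v. T v = c}. ereal (h v))
       = (if \<forall>w. T w = 0 \<longrightarrow> h w = 0 then ereal (h v0) else \<infinity>)"
proof (cases "\<forall>w. T w = 0 \<longrightarrow> h w = 0")
  case True
  have "h v = h v0" if "T v = c" for v
    using True[rule_format, of "v - v0"] that v0
    by (simp add: linear_diff[OF T] linear_diff[OF h])
  then have "(SUP v\<in>{v. T v = c}. ereal (h v)) = (SUP v\<in>{v. T v = c}. ereal (h v0))"
    by (intro SUP_cong) auto
  also have "\<dots> = ereal (h v0)" using v0 by (intro SUP_const) auto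
  finally show ?thesis using True by simp
next
  case False
  then obtain w where "T w = 0" and "h w \<noteq> 0" by blast
  have in_level: "v0 + t *\<^sub>R w \<in> {v. T v = c}" for t
    using \<open>T w = 0\<close> v0 by (simp add: linear_add[OF T] linear_scale[OF T])
  have "(SUP v\<in>{v. T v = c}. ereal (h v)) = \<infinity>"
    unfolding SUP_eq_top_iff[where 'a=ereal, unfolded top_ereal_def]
  proof (intro allI impI)
    fix x :: ereal assume "x < \<infinity>"
    then obtain M where "x \<le> ereal M" by (cases x) auto
    define t where "t = (M + 1 - h v0) / h w"
    have "h (v0 + t *\<^sub>R w) = M + 1"
      using \<open>h w \<noteq> 0\<close> by (simp add: t_def linear_add[OF h] linear_scale[OF h])
    then have "x < ereal (h (v0 + t *\<^sub>R w))"
      using \<open>x \<le> ereal M\<close> by (simp add: order.strict_trans1)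
    then show "\<exists>v\<in>{v. T v = c}. x < ereal (h v)" using in_level by blast
  qed
  then show ?thesis using False by simp
qed

lemma quadratic_form_add:
  fixes A :: "'a::real_inner \<Rightarrow> 'a"
  assumes A: "linear A" and A_sym: "\<And>p q. A p \<bullet> q = p \<bullet> A q"
  shows "A (p + r) \<bullet> (p + r) = A p \<bullet> p + 2 * (A r \<bullet> p) + A r \<bullet> r"
  using A_sym[of p r] by (simp add: linear_add[OF A] inner_add inner_commute)

lemma Gstar_eq:
  fixes A Ainv :: "'a::real_inner \<Rightarrow> 'a"
  assumes A: "linear A" and A_sym: "\<And>p q. A p \<bullet> q = p \<bullet> A q"
    and A_nonneg: "\<And>q. 0 \<le> A q \<bullet> q" and Ainv: "A (Ainv \<tau>) = \<tau>"
  shows "Gstar A \<tau> = ereal (1/2 * (Ainv \<tau> \<bullet> \<tau>))"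
  unfolding Gstar_def
proof (rule antisym)
  have "A (- Ainv \<tau>) = - \<tau>" using Ainv by (simp add: linear_neg[OF A])
  then have square:
      "A (q - Ainv \<tau>) \<bullet> (q - Ainv \<tau>) = A q \<bullet> q - 2 * (\<tau> \<bullet> q) + Ainv \<tau> \<bullet> \<tau>" for q
    using quadratic_form_add[OF A A_sym, of q "- Ainv \<tau>"]
    by (simp add: inner_commute[of \<tau> "Ainv \<tau>"])
  show "(SUP q\<in>UNIV. ereal (\<tau> \<bullet> q - Gfun A q)) \<le> ereal (1/2 * (Ainv \<tau> \<bullet> \<tau>))"
  proof (rule SUP_least)
    fix q
    have "\<tau> \<bullet> q - Gfun A q \<le> 1/2 * (Ainv \<tau> \<bullet> \<tau>)"
      using A_nonneg[of "q - Ainv \<tau>"] square[of q] unfolding Gfun_def by linarith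
    then show "ereal (\<tau> \<bullet> q - Gfun A q) \<le> ereal (1/2 * (Ainv \<tau> \<bullet> \<tau>))" by simp
  qed
next
  have "ereal (1/2 * (Ainv \<tau> \<bullet> \<tau>)) = ereal (\<tau> \<bullet> Ainv \<tau> - Gfun A (Ainv \<tau>))"
    unfolding Gfun_def Ainv inner_commute[of \<tau> "Ainv \<tau>"] by simp
  also have "\<dots> \<le> (SUP q\<in>UNIV. ereal (\<tau> \<bullet> q - Gfun A q))" by (rule SUP_upper) simp
  finally show "ereal (1/2 * (Ainv \<tau> \<bullet> \<tau>)) \<le> (SUP q\<in>UNIV. ereal (\<tau> \<bullet> q - Gfun A q))" .
qed

lemma Jp_eq_Ffun_plus_Gfun:
  assumes "v \<in> Vg tr0D gD"
  shows "ereal (Jp A Lam iota tr0N f gN v)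
       = Ffun iota tr0D tr0N f gD gN v + ereal (Gfun A (Lam v))"
  using assms unfolding Jp_def Ffun_def Gfun_def by simp

locale green_setting =
  fixes Lam :: "'v::real_vector \<Rightarrow> 'q::real_inner"
    and iota :: "'v \<Rightarrow> 'u::real_inner"
    and tr0D :: "'v \<Rightarrow> 'd::real_inner" and tr0N :: "'v \<Rightarrow> 'n::real_inner"
    and tr1D :: "'q \<Rightarrow> 'd" and tr1N :: "'q \<Rightarrow> 'n"
    and Dt :: "'v set"
  assumes Lam: "linear Lam" and iota: "linear iota"
    and tr0D: "linear tr0D" and tr0N: "linear tr0N"
    and Dt_tr: "\<And>\<phi>. \<phi> \<in> Dt \<Longrightarrow> tr0D \<phi> = 0 \<and> tr0N \<phi> = 0"
    and Dt_dense: "closure (iota ` Dt) = UNIV"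
    and green: "\<And>v \<tau>. \<tau> \<in> formal_adj_dom Lam iota Dt \<Longrightarrow>
        \<tau> \<bullet> Lam v - formal_adj Lam iota Dt \<tau> \<bullet> iota v = tr1D \<tau> \<bullet> tr0D v + tr1N \<tau> \<bullet> tr0N v"
    and tr0N_dense: "closure (tr0N ` {v. tr0D v = 0}) = UNIV"
begin

abbreviation "Sig \<equiv> formal_adj_dom Lam iota Dt"
abbreviation "Lt \<equiv> formal_adj Lam iota Dt"

lemma formal_adj_eqI:
  assumes "\<And>\<phi>. \<phi> \<in> Dt \<Longrightarrow> \<tau> \<bullet> Lam \<phi> = w \<bullet> iota \<phi>"
  shows "\<tau> \<in> Sig" and "Lt \<tau> = w"
proof -
  show "\<tau> \<in> Sig" unfolding formal_adj_dom_def using assms by blast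
  show "Lt \<tau> = w"
    unfolding formal_adj_def
  proof (rule the_equality)
    fix w' assume w': "\<forall>\<phi>\<in>Dt. \<tau> \<bullet> Lam \<phi> = w' \<bullet> iota \<phi>"
    have "w' - w = 0"
      using w' assms by (intro orthogonal_to_dense_imp_zero[OF Dt_dense]) (simp add: inner_diff_left)
    then show "w' = w" by simp
  qed (use assms in blast)
qed

lemma Sigma_fg_green:
  assumes "\<tau> \<in> Sigma_fg Sig Lt tr1N f gN"
  shows "\<tau> \<bullet> Lam v + f \<bullet> iota v = gN \<bullet> tr0N v + tr1D \<tau> \<bullet> tr0D v"
  using assms green[of \<tau> v] unfolding Sigma_fg_def by auto

lemma Sigma_fg_iff:
  "\<tau> \<in> Sigma_fg Sig Lt tr1N f gN
     \<longleftrightarrow> (\<forall>w. tr0D w = 0 \<longrightarrow> \<tau> \<bullet> Lam w + f \<bullet> iota w = gN \<bullet> tr0N w)"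
proof
  assume "\<tau> \<in> Sigma_fg Sig Lt tr1N f gN"
  then show "\<forall>w. tr0D w = 0 \<longrightarrow> \<tau> \<bullet> Lam w + f \<bullet> iota w = gN \<bullet> tr0N w"
    using Sigma_fg_green by simp
next
  assume weak: "\<forall>w. tr0D w = 0 \<longrightarrow> \<tau> \<bullet> Lam w + f \<bullet> iota w = gN \<bullet> tr0N w"
  have "\<tau> \<bullet> Lam \<phi> = (- f) \<bullet> iota \<phi>" if "\<phi> \<in> Dt" for \<phi>
    using weak[rule_format, of \<phi>] Dt_tr[OF that] by (simp add: eq_neg_iff_add_eq_0)
  then have "\<tau> \<in> Sig" and Lt: "Lt \<tau> = - f" by (blast intro: formal_adj_eqI)+
  have "tr1N \<tau> - gN = 0"
  proof (rule orthogonal_to_dense_imp_zero[OF tr0N_dense])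
    fix w assume "w \<in> {v. tr0D v = 0}"
    then show "(tr1N \<tau> - gN) \<bullet> tr0N w = 0"
      using weak green[OF \<open>\<tau> \<in> Sig\<close>, of w] Lt by (simp add: inner_diff_left)
  qed
  then show "\<tau> \<in> Sigma_fg Sig Lt tr1N f gN"
    unfolding Sigma_fg_def using \<open>\<tau> \<in> Sig\<close> Lt by simp
qed

lemma Fstar_eq:
  assumes ug: "tr0D ug = gD"
  shows "Fstar Lam iota tr0D tr0N f gD gN \<tau>
       = (if \<tau> \<in> Sigma_fg Sig Lt tr1N f gN then ereal (tr1D \<tau> \<bullet> gD) else \<infinity>)"
proof -
  define h where "h v = \<tau> \<bullet> Lam v + f \<bullet> iota v - gN \<bullet> tr0N v" for v
  have "linear h"
    unfolding h_def
    by (intro linearI) (simp_all add: linear_add[OF Lam] linear_add[OF iota] linear_add[OF tr0N]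
        linear_scale[OF Lam] linear_scale[OF iota] linear_scale[OF tr0N] inner_add_right algebra_simps)
  have "Fstar Lam iota tr0D tr0N f gD gN \<tau> = (SUP v\<in>{v. tr0D v = gD}. ereal (h v))"
    unfolding Fstar_def Vg_def
    by (intro SUP_cong) (auto simp: Ffun_def Vg_def h_def inner_commute)
  also have "\<dots> = (if \<forall>w. tr0D w = 0 \<longrightarrow> h w = 0 then ereal (h ug) else \<infinity>)"
    by (rule SUP_linear_level_set[OF \<open>linear h\<close> tr0D ug])
  also have "\<dots> = (if \<tau> \<in> Sigma_fg Sig Lt tr1N f gN then ereal (tr1D \<tau> \<bullet> gD) else \<infinity>)"
    using Sigma_fg_green[of \<tau> f gN ug] ug by (auto simp: Sigma_fg_iff h_def)
  finally show ?thesis .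
qed

end

locale mixed_bvp = green_setting Lam for Lam :: "'v::real_vector \<Rightarrow> 'q::real_inner" +
  fixes A Ainv :: "'q \<Rightarrow> 'q"
  assumes A: "linear A" and A_sym: "\<And>p q. A p \<bullet> q = p \<bullet> A q"
    and A_pos: "\<And>q. q \<noteq> 0 \<Longrightarrow> 0 < A q \<bullet> q"
    and Ainv_left: "\<And>q. Ainv (A q) = q" and Ainv_right: "\<And>q. A (Ainv q) = q"
begin

lemma A_nonneg: "0 \<le> A q \<bullet> q"
  using A_pos[of q] by (cases "q = 0") (auto simp: linear_0[OF A])

lemma Ainv_uminus: "Ainv (- \<tau>) = - Ainv \<tau>"
proof -
  have "- \<tau> = A (- Ainv \<tau>)" by (simp add: linear_neg[OF A] Ainv_right)
  then show ?thesis by (simp add: Ainv_left)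
qed

lemma dual_functional_eq:
  assumes "tr0D ug = gD"
  shows "- Fstar Lam iota tr0D tr0N f gD gN \<tau> - Gstar A (- \<tau>)
       = (if \<tau> \<in> Sigma_fg Sig Lt tr1N f gN then ereal (Jd Ainv tr1D gD \<tau>) else - \<infinity>)"
proof -
  have "Gstar A (- \<tau>) = ereal (1/2 * (Ainv (- \<tau>) \<bullet> - \<tau>))"
    by (rule Gstar_eq[OF A A_sym A_nonneg Ainv_right])
  then have "Gstar A (- \<tau>) = ereal (1/2 * (Ainv \<tau> \<bullet> \<tau>))" by (simp add: Ainv_uminus)
  then show ?thesis using Fstar_eq[OF assms] by (simp add: Jd_def)
qed

lemma duality_gap:
  assumes \<tau>: "\<tau> \<in> Sigma_fg Sig Lt tr1N f gN" and v: "v \<in> Vg tr0D gD"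
  shows "Jp A Lam iota tr0N f gN v - Jd Ainv tr1D gD \<tau>
       = 1/2 * (A (Lam v + Ainv \<tau>) \<bullet> (Lam v + Ainv \<tau>))"
proof -
  have boundary_term: "tr1D \<tau> \<bullet> gD = \<tau> \<bullet> Lam v + f \<bullet> iota v - gN \<bullet> tr0N v"
    using Sigma_fg_green[OF \<tau>, of v] v by (simp add: Vg_def)
  have square: "A (Lam v + Ainv \<tau>) \<bullet> (Lam v + Ainv \<tau>)
      = A (Lam v) \<bullet> Lam v + 2 * (\<tau> \<bullet> Lam v) + Ainv \<tau> \<bullet> \<tau>"
    using quadratic_form_add[OF A A_sym, of "Lam v" "Ainv \<tau>"]
    by (simp add: Ainv_right inner_commute[of \<tau> "Ainv \<tau>"])
  show ?thesis unfolding Jp_def Jd_def boundary_term square by simp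
qed

lemma Jp_add_scaleR:
  "Jp A Lam iota tr0N f gN (u + t *\<^sub>R w) = Jp A Lam iota tr0N f gN u
     + (A (Lam u) \<bullet> Lam w - f \<bullet> iota w + gN \<bullet> tr0N w) * t + (A (Lam w) \<bullet> Lam w / 2) * t\<^sup>2"
proof -
  have "A (Lam (u + t *\<^sub>R w)) \<bullet> Lam (u + t *\<^sub>R w)
      = A (Lam u) \<bullet> Lam u + 2 * t * (A (Lam u) \<bullet> Lam w) + t\<^sup>2 * (A (Lam w) \<bullet> Lam w)"
    using quadratic_form_add[OF A A_sym, of "Lam u" "t *\<^sub>R Lam w"] A_sym[of "Lam w" "Lam u"]
    by (simp add: linear_add[OF Lam] linear_scale[OF Lam] linear_scale[OF A]
        inner_commute[of "Lam w"] power2_eq_square)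
  then show ?thesis
    by (simp add: Jp_def linear_add[OF iota] linear_add[OF tr0N] linear_scale[OF iota]
        linear_scale[OF tr0N] inner_add_right algebra_simps)
qed

lemma minimizer_flux_mem_Sigma_fg:
  assumes u: "u \<in> Vg tr0D gD"
    and min: "\<And>v. v \<in> Vg tr0D gD \<Longrightarrow> Jp A Lam iota tr0N f gN u \<le> Jp A Lam iota tr0N f gN v"
  shows "- A (Lam u) \<in> Sigma_fg Sig Lt tr1N f gN"
  unfolding Sigma_fg_iff
proof (intro allI impI)
  fix w assume "tr0D w = 0"
  then have line: "u + t *\<^sub>R w \<in> Vg tr0D gD" for t
    using u by (simp add: Vg_def linear_add[OF tr0D] linear_scale[OF tr0D])
  have "0 \<le> (A (Lam u) \<bullet> Lam w - f \<bullet> iota w + gN \<bullet> tr0N w) * t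
      + (A (Lam w) \<bullet> Lam w / 2) * t\<^sup>2" for t
    using min[OF line, of t] Jp_add_scaleR[of f gN u t w] by linarith
  then have "A (Lam u) \<bullet> Lam w - f \<bullet> iota w + gN \<bullet> tr0N w = 0"
    by (rule linear_coeff_zero_if_quadratic_nonneg)
  then show "- A (Lam u) \<bullet> Lam w + f \<bullet> iota w = gN \<bullet> tr0N w" by simp
qed

lemma strong_duality:
  assumes u: "u \<in> Vg tr0D gD"
    and u_min: "\<And>v. v \<in> Vg tr0D gD \<Longrightarrow> Jp A Lam iota tr0N f gN u \<le> Jp A Lam iota tr0N f gN v"
    and \<sigma>: "\<sigma> \<in> Sigma_fg Sig Lt tr1N f gN"
    and \<sigma>_max: "\<And>\<tau>. \<tau> \<in> Sigma_fg Sig Lt tr1N f gN \<Longrightarrow> Jd Ainv tr1D gD \<tau> \<le> Jd Ainv tr1D gD \<sigma>"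
  shows "Jp A Lam iota tr0N f gN u = Jd Ainv tr1D gD \<sigma>" and "\<sigma> = - A (Lam u)"
proof -
  have flux: "- A (Lam u) \<in> Sigma_fg Sig Lt tr1N f gN"
    using minimizer_flux_mem_Sigma_fg[OF u u_min] .
  have "Ainv (- A (Lam u)) = - Lam u"
    by (simp add: Ainv_uminus Ainv_left)
  then have "Jp A Lam iota tr0N f gN u = Jd Ainv tr1D gD (- A (Lam u))"
    using duality_gap[OF flux u] by (simp add: linear_0[OF A])
  also have "\<dots> \<le> Jd Ainv tr1D gD \<sigma>" using \<sigma>_max[OF flux] .
  finally have "Jp A Lam iota tr0N f gN u \<le> Jd Ainv tr1D gD \<sigma>" .
  moreover have "Jd Ainv tr1D gD \<sigma> \<le> Jp A Lam iota tr0N f gN u"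
    using duality_gap[OF \<sigma> u] A_nonneg[of "Lam u + Ainv \<sigma>"] by simp
  ultimately show "Jp A Lam iota tr0N f gN u = Jd Ainv tr1D gD \<sigma>" by simp
  then have "A (Lam u + Ainv \<sigma>) \<bullet> (Lam u + Ainv \<sigma>) = 0"
    using duality_gap[OF \<sigma> u] by simp
  then have "Lam u + Ainv \<sigma> = 0" using A_pos[of "Lam u + Ainv \<sigma>"] by auto
  then have "Ainv \<sigma> = - Lam u" by (simp add: add_eq_0_iff)
  then have "A (Ainv \<sigma>) = - A (Lam u)" by (simp add: linear_neg[OF A])
  then show "\<sigma> = - A (Lam u)" by (simp add: Ainv_right)
qed

end

theorem theorem3p5:
  fixes Lam :: "'v::{real_inner,complete_space} \<Rightarrow> 'q::{real_inner,complete_space}"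
    and iota :: "'v \<Rightarrow> 'u::{real_inner,complete_space}"
    and A Ainv :: "'q \<Rightarrow> 'q"
    and tr0D :: "'v \<Rightarrow> 'd::{real_inner,complete_space}"
    and tr0N :: "'v \<Rightarrow> 'n::{real_inner,complete_space}"
    and tr1D :: "'q \<Rightarrow> 'd" and tr1N :: "'q \<Rightarrow> 'n"
    and Dt :: "'v set"
    and f :: 'u and gD :: 'd and gN :: 'n and ug :: 'v
    and c1 c2 c3 \<beta> :: real
  defines "Sig \<equiv> formal_adj_dom Lam iota Dt"
      and "Lt \<equiv> formal_adj Lam iota Dt"
      and "V0 \<equiv> {v. tr0D v = 0}"
  assumes
    \<comment> \<open>V compactly embedded in L2\<close>
    iota_bl: "bounded_linear iota" and iota_inj: "inj iota"
    and iota_compact: "compact (closure (iota ` cball 0 1))"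
    \<comment> \<open>Lambda linear and continuous\<close>
    and Lam_bl: "bounded_linear Lam"
    \<comment> \<open>A self-adjoint, bounded above and below; Ainv its inverse\<close>
    and A_bl: "bounded_linear A"
    and A_sym: "\<And>p q. A p \<bullet> q = p \<bullet> A q"
    and c1_pos: "c1 > 0" and c2_pos: "c2 > 0"
    and A_bounds: "\<And>q. c1 * (norm q)\<^sup>2 \<le> A q \<bullet> q \<and> A q \<bullet> q \<le> c2 * (norm q)\<^sup>2"
    and Ainv_left: "\<And>q. Ainv (A q) = q" and Ainv_right: "\<And>q. A (Ainv q) = q"
    \<comment> \<open>test functions (abstract C_c^infinity): a subspace with zero traces, dense in L2\<close>
    and Dt_sub: "subspace Dt"
    and Dt_tr: "\<And>\<phi>. \<phi> \<in> Dt \<Longrightarrow> tr0D \<phi> = 0 \<and> tr0N \<phi> = 0"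
    and Dt_dense: "closure (iota ` Dt) = UNIV"
    \<comment> \<open>trace operators and Green's formula\<close>
    and tr0D_bl: "bounded_linear tr0D" and tr0N_bl: "bounded_linear tr0N"
    and tr1D_lin: "linear tr1D" and tr1N_lin: "linear tr1N"
    and green: "\<And>v \<tau>. \<tau> \<in> Sig \<Longrightarrow>
        \<tau> \<bullet> Lam v - Lt \<tau> \<bullet> iota v = tr1D \<tau> \<bullet> tr0D v + tr1N \<tau> \<bullet> tr0N v"
    and tr0N_dense: "closure (tr0N ` V0) = UNIV"
    \<comment> \<open>meas(Gamma_D) \<noteq> 0\<close>
    and GammaD_nontriv: "(UNIV :: 'd set) \<noteq> {0}"
    \<comment> \<open>Poincare-type inequality and inf-sup condition\<close>
    and c3_pos: "c3 > 0"
    and poincare: "\<And>v. v \<in> V0 \<Longrightarrow> norm (Lam v) \<ge> c3 * norm (iota v)"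
    and beta_pos: "\<beta> > 0"
    and infsup: "\<And>w. ereal (\<beta> * norm w) \<le>
        (SUP \<tau>\<in>Sig - {0}. ereal ((Lt \<tau> \<bullet> w) / (norm \<tau> + norm (Lt \<tau>))))"
    \<comment> \<open>lifting of the Dirichlet datum\<close>
    and ug: "tr0D ug = gD"
  shows
    "(\<forall>v\<in>Vg tr0D gD. ereal (Jp A Lam iota tr0N f gN v)
         = Ffun iota tr0D tr0N f gD gN v + ereal (Gfun A (Lam v)))
     \<and> (\<forall>\<tau>. - Fstar Lam iota tr0D tr0N f gD gN \<tau> - Gstar A (- \<tau>)
         = (if \<tau> \<in> Sigma_fg Sig Lt tr1N f gN then ereal (Jd Ainv tr1D gD \<tau>) else - \<infinity>))
     \<and> (\<forall>u \<sigma>. u \<in> Vg tr0D gD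
          \<longrightarrow> (\<forall>v\<in>Vg tr0D gD. Jp A Lam iota tr0N f gN u \<le> Jp A Lam iota tr0N f gN v)
          \<longrightarrow> \<sigma> \<in> Sigma_fg Sig Lt tr1N f gN
          \<longrightarrow> (\<forall>\<tau>\<in>Sigma_fg Sig Lt tr1N f gN. Jd Ainv tr1D gD \<tau> \<le> Jd Ainv tr1D gD \<sigma>)
          \<longrightarrow> Jp A Lam iota tr0N f gN u = Jd Ainv tr1D gD \<sigma> \<and> \<sigma> = - A (Lam u))"
proof -
  have A_pos: "0 < A q \<bullet> q" if "q \<noteq> 0" for q
  proof -
    have "0 < c1 * (norm q)\<^sup>2" using c1_pos that by simp
    then show ?thesis using A_bounds[of q] by linarith
  qed
  interpret mixed_bvp where Lam = Lam and iota = iota and tr0D = tr0D and tr0N = tr0N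
      and tr1D = tr1D and tr1N = tr1N and Dt = Dt and A = A and Ainv = Ainv
    using bounded_linear.linear[OF Lam_bl] bounded_linear.linear[OF iota_bl]
      bounded_linear.linear[OF tr0D_bl] bounded_linear.linear[OF tr0N_bl]
      Dt_tr Dt_dense green[unfolded Sig_def Lt_def] tr0N_dense[unfolded V0_def]
      bounded_linear.linear[OF A_bl] A_sym A_pos Ainv_left Ainv_right
    by (intro mixed_bvp.intro green_setting.intro mixed_bvp_axioms.intro) assumption+
  show ?thesis
    unfolding Sig_def Lt_def
    by (auto simp: Jp_eq_Ffun_plus_Gfun dual_functional_eq[OF ug] intro: strong_duality)
qed

end
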